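(* Let $J\subset I$, $u\in W$, $w\in W^J$ and $v\in W_J$. Write $uwv=w'v'$ with $w'\in W^J$ and $v'\in W_J$. If $l(uwv)=l(wv)-l(u)$, then $w'\le w$. If moreover $w'=w$, then $\{w^{-1}(\alpha_i): i\in\mathrm{supp}(u)\}\subset\{\alpha_j:j\in J\}$.
   Context: $W$ is the Weyl group of a semisimple group with simple roots $\alpha_i$, $i\in I$, simple reflections $s_i$, length $l$ and Bruhat order $\le$. For $J\subset I$, $W_J$ is the subgroup generated by $\{s_j:j\in J\}$ and $W^J$ the set of minimal length representatives of $W/W_J$. For $u\in W$, $\mathrm{supp}(u)\subset I$ is the set of $i$ such that $s_i$ occurs in some (equivalently any) reduced expression of $u$. *)

theory Defs
  imports "HOL-Analysis.Analysis"
begin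

definition refl :: "'a::real_inner \<Rightarrow> 'a \<Rightarrow> 'a" where
  "refl a x = x - (2 * (x \<bullet> a) / (a \<bullet> a)) *\<^sub>R a"

definition root_system :: "'a::euclidean_space set \<Rightarrow> bool" where
  "root_system \<Phi> \<longleftrightarrow> finite \<Phi> \<and> 0 \<notin> \<Phi> \<and> span \<Phi> = UNIV
     \<and> (\<forall>a\<in>\<Phi>. refl a ` \<Phi> = \<Phi>)
     \<and> (\<forall>a\<in>\<Phi>. \<forall>b\<in>\<Phi>. 2 * (b \<bullet> a) / (a \<bullet> a) \<in> \<int>)
     \<and> (\<forall>a\<in>\<Phi>. \<forall>c. c *\<^sub>R a \<in> \<Phi> \<longrightarrow> c = 1 \<or> c = -1)"

definition simple_system :: "'a::euclidean_space set \<Rightarrow> 'i set \<Rightarrow> ('i \<Rightarrow> 'a) \<Rightarrow> bool" where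
  "simple_system \<Phi> I \<alpha> \<longleftrightarrow> finite I \<and> inj_on \<alpha> I \<and> \<alpha> ` I \<subseteq> \<Phi>
     \<and> independent (\<alpha> ` I)
     \<and> (\<forall>b\<in>\<Phi>. \<exists>c :: 'i \<Rightarrow> int. b = (\<Sum>i\<in>I. of_int (c i) *\<^sub>R \<alpha> i)
            \<and> ((\<forall>i\<in>I. c i \<ge> 0) \<or> (\<forall>i\<in>I. c i \<le> 0)))"

definition sref :: "('i \<Rightarrow> 'a::real_inner) \<Rightarrow> 'i \<Rightarrow> 'a \<Rightarrow> 'a" where
  "sref \<alpha> i = refl (\<alpha> i)"

definition word_eval :: "('i \<Rightarrow> 'a::real_inner) \<Rightarrow> 'i list \<Rightarrow> 'a \<Rightarrow> 'a" where
  "word_eval \<alpha> ws = foldr (\<lambda>i f. sref \<alpha> i \<circ> f) ws id"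

definition weyl :: "('i \<Rightarrow> 'a::real_inner) \<Rightarrow> 'i set \<Rightarrow> ('a \<Rightarrow> 'a) set" where
  "weyl \<alpha> J = word_eval \<alpha> ` lists J"

definition len :: "('i \<Rightarrow> 'a::real_inner) \<Rightarrow> 'i set \<Rightarrow> ('a \<Rightarrow> 'a) \<Rightarrow> nat" where
  "len \<alpha> I w = (LEAST n. \<exists>ws\<in>lists I. length ws = n \<and> word_eval \<alpha> ws = w)"

definition min_reps :: "('i \<Rightarrow> 'a::real_inner) \<Rightarrow> 'i set \<Rightarrow> 'i set \<Rightarrow> ('a \<Rightarrow> 'a) set" where
  "min_reps \<alpha> I J = {w \<in> weyl \<alpha> I. \<forall>v\<in>weyl \<alpha> J. len \<alpha> I w \<le> len \<alpha> I (w \<circ> v)}"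

definition reflections :: "('i \<Rightarrow> 'a::real_inner) \<Rightarrow> 'i set \<Rightarrow> ('a \<Rightarrow> 'a) set" where
  "reflections \<alpha> I = {word_eval \<alpha> ws \<circ> sref \<alpha> i \<circ> word_eval \<alpha> (rev ws) | ws i. ws \<in> lists I \<and> i \<in> I}"

definition bruhat_le :: "('i \<Rightarrow> 'a::real_inner) \<Rightarrow> 'i set \<Rightarrow> ('a \<Rightarrow> 'a) \<Rightarrow> ('a \<Rightarrow> 'a) \<Rightarrow> bool" where
  "bruhat_le \<alpha> I x y \<longleftrightarrow> x \<in> weyl \<alpha> I \<and> y \<in> weyl \<alpha> I \<and>
     (x, y) \<in> {(a, a \<circ> t) | a t. a \<in> weyl \<alpha> I \<and> t \<in> reflections \<alpha> I
                    \<and> len \<alpha> I a < len \<alpha> I (a \<circ> t)}\<^sup>*"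

definition supp :: "('i \<Rightarrow> 'a::real_inner) \<Rightarrow> 'i set \<Rightarrow> ('a \<Rightarrow> 'a) \<Rightarrow> 'i set" where
  "supp \<alpha> I u = {i \<in> I. \<exists>ws\<in>lists I. word_eval \<alpha> ws = u \<and> length ws = len \<alpha> I u \<and> i \<in> set ws}"

end

theory Submission
  imports Defs
begin

text \<open>Call \<open>a \<in> W\<close> \<open>J\<close>-positive if it maps every \<open>\<alpha>\<^sub>j\<close>, \<open>j \<in> J\<close>, to a positive root.
  Minimal coset representatives are \<open>J\<close>-positive, and every coset \<open>a W\<^sub>J\<close> contains at most one
  \<open>J\<close>-positive element. Write \<open>u = s\<^sub>i\<^sub>1 \<dots> s\<^sub>i\<^sub>k\<close> reduced and multiply \<open>w v\<close> by its letters from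
  the right end of the word; by the length hypothesis each letter \<open>s\<^sub>i\<close> shortens the current
  element \<open>a b\<close> (\<open>a\<close> \<open>J\<close>-positive, \<open>b \<in> W\<^sub>J\<close>), so \<open>(a b)\<^sup>-\<^sup>1 \<alpha>\<^sub>i\<close> is negative. If
  \<open>a\<^sup>-\<^sup>1 \<alpha>\<^sub>i\<close> is negative too, then \<open>s\<^sub>i a\<close> is \<open>J\<close>-positive and strictly below \<open>a\<close> in the
  Bruhat order. Otherwise \<open>a \<alpha>\<^sub>j = \<alpha>\<^sub>i\<close> for some \<open>j \<in> J\<close>, so \<open>s\<^sub>i a b = a (s\<^sub>j b)\<close> and \<open>a\<close> does not
  change. At the end \<open>a\<close> is the \<open>J\<close>-positive element of \<open>w' W\<^sub>J\<close>, that is \<open>w'\<close>; hence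
  \<open>w' \<le> w\<close>, and \<open>w' = w\<close> forces the second case at every letter, i.e.
  \<open>w\<^sup>-\<^sup>1 \<alpha>\<^sub>i \<in> \<alpha> ` J\<close> for all \<open>i\<close> in any reduced word for \<open>u\<close>.\<close>

lemma linear_refl: "linear (refl a)"
  unfolding refl_def
  by (rule linearI) (auto simp: inner_add_left algebra_simps add_divide_distrib diff_divide_distrib)

lemma refl_inner_refl: "a \<noteq> 0 \<Longrightarrow> refl a x \<bullet> refl a y = x \<bullet> y"
  unfolding refl_def by (simp add: inner_diff_left inner_diff_right inner_commute field_simps)

lemma refl_refl: "a \<noteq> 0 \<Longrightarrow> refl a (refl a x) = x"
  unfolding refl_def by (simp add: inner_diff_left field_simps)

lemma refl_self: "a \<noteq> 0 \<Longrightarrow> refl a a = - a"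
  unfolding refl_def by (simp add: algebra_simps scaleR_2)

lemma orthogonal_map_comp_refl:
  assumes "linear f" and "\<And>x y. f x \<bullet> f y = x \<bullet> y"
  shows "f \<circ> refl a = refl (f a) \<circ> f"
  using assms unfolding refl_def by (simp add: fun_eq_iff linear_diff linear_cmul)

lemma word_eval_Nil [simp]: "word_eval \<alpha> [] = id"
  by (simp add: word_eval_def)

lemma word_eval_Cons [simp]: "word_eval \<alpha> (i # ws) = sref \<alpha> i \<circ> word_eval \<alpha> ws"
  by (simp add: word_eval_def)

lemma word_eval_append: "word_eval \<alpha> (ws @ vs) = word_eval \<alpha> ws \<circ> word_eval \<alpha> vs"
  by (induction ws) auto

lemma weyl_induct [consumes 1, case_names id sref]:
  assumes "f \<in> weyl \<alpha> S" and "P id"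
    and "\<And>i f. i \<in> S \<Longrightarrow> f \<in> weyl \<alpha> S \<Longrightarrow> P f \<Longrightarrow> P (sref \<alpha> i \<circ> f)"
  shows "P f"
proof -
  obtain ws where "ws \<in> lists S" "f = word_eval \<alpha> ws"
    using assms(1) unfolding weyl_def by blast
  then show ?thesis
  proof (induction ws arbitrary: f)
    case Nil
    then show ?case using assms(2) by (simp add: id_def)
  next
    case (Cons i ws)
    then have "i \<in> S" "word_eval \<alpha> ws \<in> weyl \<alpha> S" "P (word_eval \<alpha> ws)"
      by (auto simp: weyl_def)
    then have "P (sref \<alpha> i \<circ> word_eval \<alpha> ws)" by (rule assms(3))
    then show ?case using Cons by (simp only: word_eval_Cons)
  qed
qed

lemma word_eval_in_weyl: "ws \<in> lists S \<Longrightarrow> word_eval \<alpha> ws \<in> weyl \<alpha> S"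
  by (simp add: weyl_def)

lemma weyl_comp: "f \<in> weyl \<alpha> S \<Longrightarrow> g \<in> weyl \<alpha> S \<Longrightarrow> f \<circ> g \<in> weyl \<alpha> S"
  unfolding weyl_def by (auto simp flip: word_eval_append intro!: image_eqI)

lemma sref_in_weyl: "i \<in> S \<Longrightarrow> sref \<alpha> i \<in> weyl \<alpha> S"
  using word_eval_in_weyl[of "[i]" S \<alpha>] by simp

lemma weyl_mono: "J \<subseteq> I \<Longrightarrow> weyl \<alpha> J \<subseteq> weyl \<alpha> I"
  unfolding weyl_def using lists_mono by blast

lemma len_le_length: "ws \<in> lists S \<Longrightarrow> len \<alpha> S (word_eval \<alpha> ws) \<le> length ws"
  unfolding len_def by (rule Least_le) blast

lemma obtain_reduced_word:
  assumes "f \<in> weyl \<alpha> S"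
  obtains ws where "ws \<in> lists S" "length ws = len \<alpha> S f" "word_eval \<alpha> ws = f"
proof -
  have "\<exists>ws\<in>lists S. length ws = len \<alpha> S f \<and> word_eval \<alpha> ws = f"
    unfolding len_def by (rule LeastI_ex) (use assms in \<open>auto simp: weyl_def\<close>)
  then show ?thesis using that by blast
qed

lemma len_comp_le:
  assumes "f \<in> weyl \<alpha> S" and "g \<in> weyl \<alpha> S"
  shows "len \<alpha> S (f \<circ> g) \<le> len \<alpha> S f + len \<alpha> S g"
proof -
  obtain ws where "ws \<in> lists S" "length ws = len \<alpha> S f" "word_eval \<alpha> ws = f"
    using obtain_reduced_word[OF assms(1)] .
  moreover obtain vs where "vs \<in> lists S" "length vs = len \<alpha> S g" "word_eval \<alpha> vs = g"
    using obtain_reduced_word[OF assms(2)] .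
  ultimately show ?thesis using len_le_length[of "ws @ vs" S \<alpha>] by (simp add: word_eval_append)
qed

definition bruhat_step :: "('i \<Rightarrow> 'a::real_inner) \<Rightarrow> 'i set \<Rightarrow> (('a \<Rightarrow> 'a) \<times> ('a \<Rightarrow> 'a)) set" where
  "bruhat_step \<alpha> I = {(a, a \<circ> t) | a t. a \<in> weyl \<alpha> I \<and> t \<in> reflections \<alpha> I
                        \<and> len \<alpha> I a < len \<alpha> I (a \<circ> t)}"

lemma bruhat_le_iff:
  "bruhat_le \<alpha> I x y \<longleftrightarrow> x \<in> weyl \<alpha> I \<and> y \<in> weyl \<alpha> I \<and> (x, y) \<in> (bruhat_step \<alpha> I)\<^sup>*"
  by (simp add: bruhat_le_def bruhat_step_def)

lemma bruhat_stepI: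
  "a \<in> weyl \<alpha> I \<Longrightarrow> t \<in> reflections \<alpha> I \<Longrightarrow> len \<alpha> I a < len \<alpha> I (a \<circ> t)
    \<Longrightarrow> (a, a \<circ> t) \<in> bruhat_step \<alpha> I"
  unfolding bruhat_step_def by blast

definition nonneg_comb :: "('i \<Rightarrow> 'a::real_vector) \<Rightarrow> 'i set \<Rightarrow> 'a \<Rightarrow> bool" where
  "nonneg_comb \<alpha> S x \<longleftrightarrow> (\<exists>c. (\<forall>i\<in>S. 0 \<le> c i) \<and> x = (\<Sum>i\<in>S. c i *\<^sub>R \<alpha> i))"

lemma nonneg_comb_0: "nonneg_comb \<alpha> S 0"
  unfolding nonneg_comb_def by (intro exI[of _ "\<lambda>_. 0"]) auto

lemma nonneg_comb_add:
  assumes "nonneg_comb \<alpha> S x" and "nonneg_comb \<alpha> S y"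
  shows "nonneg_comb \<alpha> S (x + y)"
proof -
  obtain c d where "\<forall>i\<in>S. 0 \<le> c i" "x = (\<Sum>i\<in>S. c i *\<^sub>R \<alpha> i)"
    and "\<forall>i\<in>S. 0 \<le> d i" "y = (\<Sum>i\<in>S. d i *\<^sub>R \<alpha> i)"
    using assms unfolding nonneg_comb_def by blast
  then show ?thesis unfolding nonneg_comb_def
    by (intro exI[of _ "\<lambda>i. c i + d i"]) (auto simp: scaleR_add_left sum.distrib)
qed

lemma nonneg_comb_scaleR:
  assumes "nonneg_comb \<alpha> S x" and "0 \<le> t"
  shows "nonneg_comb \<alpha> S (t *\<^sub>R x)"
proof -
  obtain c where "\<forall>i\<in>S. 0 \<le> c i" "x = (\<Sum>i\<in>S. c i *\<^sub>R \<alpha> i)"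
    using assms(1) unfolding nonneg_comb_def by blast
  then show ?thesis unfolding nonneg_comb_def using assms(2)
    by (intro exI[of _ "\<lambda>i. t * c i"]) (auto simp: scaleR_sum_right)
qed

lemma nonneg_comb_sum:
  "finite T \<Longrightarrow> (\<And>k. k \<in> T \<Longrightarrow> nonneg_comb \<alpha> S (x k) \<and> 0 \<le> c k)
    \<Longrightarrow> nonneg_comb \<alpha> S (\<Sum>k\<in>T. c k *\<^sub>R x k)"
  by (induction T rule: finite_induct) (auto intro!: nonneg_comb_add nonneg_comb_scaleR nonneg_comb_0)

lemma sum_indicator_scaleR:
  fixes \<alpha> :: "'i \<Rightarrow> 'a::real_vector"
  assumes "finite S" and "i \<in> S"
  shows "(\<Sum>k\<in>S. (if k = i then r else 0) *\<^sub>R \<alpha> k) = r *\<^sub>R \<alpha> i"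
proof -
  have "(\<Sum>k\<in>S. (if k = i then r else 0) *\<^sub>R \<alpha> k) = (\<Sum>k\<in>S. if k = i then r *\<^sub>R \<alpha> k else 0)"
    by (rule sum.cong) auto
  also have "\<dots> = r *\<^sub>R \<alpha> i" using assms by (simp add: sum.delta)
  finally show ?thesis .
qed

lemma nonneg_comb_base: "finite S \<Longrightarrow> i \<in> S \<Longrightarrow> nonneg_comb \<alpha> S (\<alpha> i)"
  unfolding nonneg_comb_def
  by (intro exI[of _ "\<lambda>k. if k = i then 1 else 0"]) (simp add: sum_indicator_scaleR)

locale simple_roots =
  fixes \<Phi> :: "'a::euclidean_space set" and I :: "'i set" and \<alpha> :: "'i \<Rightarrow> 'a"
  assumes root_system: "root_system \<Phi>" and simple_system: "simple_system \<Phi> I \<alpha>"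
begin

abbreviation W where "W \<equiv> weyl \<alpha> I"
abbreviation positive where "positive \<equiv> nonneg_comb \<alpha> I"

lemma finite_I: "finite I"
  using simple_system by (simp add: simple_system_def)

lemma simple_root: "i \<in> I \<Longrightarrow> \<alpha> i \<in> \<Phi>"
  using simple_system by (auto simp: simple_system_def)

lemma root_nonzero: "x \<in> \<Phi> \<Longrightarrow> x \<noteq> 0"
  using root_system by (auto simp: root_system_def)

lemma simple_root_nonzero: "i \<in> I \<Longrightarrow> \<alpha> i \<noteq> 0"
  using simple_root root_nonzero by blast

lemma refl_root: "a \<in> \<Phi> \<Longrightarrow> b \<in> \<Phi> \<Longrightarrow> refl a b \<in> \<Phi>"
  using root_system unfolding root_system_def by blast

lemma root_multiple: "a \<in> \<Phi> \<Longrightarrow> c *\<^sub>R a \<in> \<Phi> \<Longrightarrow> c = 1 \<or> c = -1"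
  using root_system unfolding root_system_def by blast

lemma simple_coeff_unique:
  assumes "(\<Sum>i\<in>I. c i *\<^sub>R \<alpha> i) = (\<Sum>i\<in>I. d i *\<^sub>R \<alpha> i)" and "k \<in> I"
  shows "c k = d k"
proof -
  have inj: "inj_on \<alpha> I" and indep: "independent (\<alpha> ` I)"
    using simple_system by (simp_all add: simple_system_def)
  let ?u = "\<lambda>v. c (inv_into I \<alpha> v) - d (inv_into I \<alpha> v)"
  have "(\<Sum>v\<in>\<alpha> ` I. ?u v *\<^sub>R v) = (\<Sum>i\<in>I. (c i - d i) *\<^sub>R \<alpha> i)"
    by (rule sum.reindex_cong[OF inj]) (auto simp: inv_into_f_f[OF inj])
  also have "\<dots> = 0" using assms(1) by (simp add: scaleR_diff_left sum_subtractf)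
  finally have "?u (\<alpha> k) = 0"
    using independentD[OF indep, of "\<alpha> ` I" ?u "\<alpha> k"] finite_I assms(2) by auto
  then show ?thesis using assms(2) by (simp add: inv_into_f_f[OF inj])
qed

lemma root_positive_or_negative: "x \<in> \<Phi> \<Longrightarrow> positive x \<or> positive (- x)"
proof -
  assume "x \<in> \<Phi>"
  then obtain c :: "'i \<Rightarrow> int" where c: "x = (\<Sum>i\<in>I. of_int (c i) *\<^sub>R \<alpha> i)"
    and sign: "(\<forall>i\<in>I. c i \<ge> 0) \<or> (\<forall>i\<in>I. c i \<le> 0)"
    using simple_system unfolding simple_system_def by blast
  from sign show ?thesis
  proof
    assume "\<forall>i\<in>I. c i \<ge> 0"
    then show ?thesis unfolding nonneg_comb_def using c
      by (intro disjI1 exI[of _ "\<lambda>i. of_int (c i)"]) auto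
  next
    assume "\<forall>i\<in>I. c i \<le> 0"
    then show ?thesis unfolding nonneg_comb_def using c
      by (intro disjI2 exI[of _ "\<lambda>i. - of_int (c i)"]) (auto simp: sum_negf)
  qed
qed

lemma positive_neg_eq_0:
  assumes "positive x" and "positive (- x)"
  shows "x = 0"
proof -
  obtain c d where c: "\<forall>i\<in>I. 0 \<le> c i" "x = (\<Sum>i\<in>I. c i *\<^sub>R \<alpha> i)"
    and d: "\<forall>i\<in>I. 0 \<le> d i" "- x = (\<Sum>i\<in>I. d i *\<^sub>R \<alpha> i)"
    using assms unfolding nonneg_comb_def by blast
  have "(\<Sum>i\<in>I. (c i + d i) *\<^sub>R \<alpha> i) = (\<Sum>i\<in>I. 0 *\<^sub>R \<alpha> i)"
    using c d by (simp add: scaleR_add_left sum.distrib flip: d(2))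
  then have "\<forall>k\<in>I. c k + d k = 0"
    using simple_coeff_unique[of "\<lambda>k. c k + d k" "\<lambda>_. 0"] by blast
  then have "\<forall>k\<in>I. c k = 0" using c d by force
  then show ?thesis using c by simp
qed

lemma root_not_positive_neg: "x \<in> \<Phi> \<Longrightarrow> positive x \<Longrightarrow> \<not> positive (- x)"
  using positive_neg_eq_0 root_nonzero by blast

text \<open>This is where reducedness of \<open>\<Phi>\<close> enters.\<close>

lemma positive_root_below_simple:
  assumes "\<beta> \<in> \<Phi>" and "positive \<beta>" and "positive x" and "\<beta> + x = r *\<^sub>R \<alpha> i" and "i \<in> I"
  shows "\<beta> = \<alpha> i"
proof -
  obtain c d where c: "\<forall>k\<in>I. 0 \<le> c k" "\<beta> = (\<Sum>k\<in>I. c k *\<^sub>R \<alpha> k)"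
    and d: "\<forall>k\<in>I. 0 \<le> d k" "x = (\<Sum>k\<in>I. d k *\<^sub>R \<alpha> k)"
    using assms(2,3) unfolding nonneg_comb_def by blast
  have "(\<Sum>k\<in>I. (c k + d k) *\<^sub>R \<alpha> k) = (\<Sum>k\<in>I. (if k = i then r else 0) *\<^sub>R \<alpha> k)"
    using assms(4,5) c(2) d(2) finite_I by (simp add: scaleR_add_left sum.distrib sum_indicator_scaleR)
  then have "\<forall>k\<in>I. c k + d k = (if k = i then r else 0)"
    using simple_coeff_unique[of "\<lambda>k. c k + d k" "\<lambda>k. if k = i then r else 0"] by blast
  then have "\<forall>k\<in>I. k \<noteq> i \<longrightarrow> c k = 0" using c(1) d(1) by force
  then have "\<beta> = (\<Sum>k\<in>I. (if k = i then c i else 0) *\<^sub>R \<alpha> k)"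
    unfolding c(2) by (intro sum.cong) auto
  also have "\<dots> = c i *\<^sub>R \<alpha> i" using finite_I assms(5) by (rule sum_indicator_scaleR)
  finally have "\<beta> = c i *\<^sub>R \<alpha> i" .
  moreover have "c i = 1 \<or> c i = -1"
    using root_multiple[OF simple_root[OF assms(5)]] assms(1) calculation by simp
  ultimately show ?thesis using c(1) assms(5) by force
qed

lemma sref_positive:
  assumes "i \<in> I" and "\<beta> \<in> \<Phi>" and "positive \<beta>" and "\<beta> \<noteq> \<alpha> i"
  shows "positive (sref \<alpha> i \<beta>)"
proof (rule ccontr)
  assume "\<not> positive (sref \<alpha> i \<beta>)"
  moreover have "sref \<alpha> i \<beta> \<in> \<Phi>"
    unfolding sref_def using refl_root simple_root assms(1,2) by blast
  ultimately have "positive (- sref \<alpha> i \<beta>)" using root_positive_or_negative by blast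
  moreover have "\<beta> + - sref \<alpha> i \<beta> = (2 * (\<beta> \<bullet> \<alpha> i) / (\<alpha> i \<bullet> \<alpha> i)) *\<^sub>R \<alpha> i"
    unfolding sref_def refl_def by simp
  ultimately have "\<beta> = \<alpha> i" using positive_root_below_simple assms by blast
  then show False using assms(4) by contradiction
qed

lemma simple_root_indecomposable:
  assumes "finite S" and "i \<in> I" and "\<alpha> i = (\<Sum>j\<in>S. c j *\<^sub>R \<beta> j)"
    and "\<And>j. j \<in> S \<Longrightarrow> 0 \<le> c j \<and> \<beta> j \<in> \<Phi> \<and> positive (\<beta> j)"
  shows "\<exists>j\<in>S. \<beta> j = \<alpha> i"
proof -
  have "\<exists>j\<in>S. c j \<noteq> 0"
  proof (rule ccontr)
    assume "\<not> (\<exists>j\<in>S. c j \<noteq> 0)"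
    then have "\<alpha> i = 0" using assms(3) by simp
    then show False using simple_root_nonzero[OF assms(2)] by contradiction
  qed
  then obtain j0 where j0: "j0 \<in> S" "c j0 \<noteq> 0" by blast
  then have c0: "c j0 > 0" using assms(4) by force
  define x where "x = (1 / c j0) *\<^sub>R (\<Sum>j\<in>S - {j0}. c j *\<^sub>R \<beta> j)"
  have "positive x"
    unfolding x_def using assms(1,4) c0 by (auto intro!: nonneg_comb_scaleR nonneg_comb_sum)
  moreover have "\<beta> j0 + x = (1 / c j0) *\<^sub>R \<alpha> i"
    unfolding x_def assms(3) sum.remove[OF assms(1) j0(1)] using c0
    by (simp add: scaleR_add_right)
  ultimately have "\<beta> j0 = \<alpha> i" using positive_root_below_simple assms(2,4) j0(1) by blast
  then show ?thesis using j0(1) by blast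
qed

lemma sref_root: "i \<in> I \<Longrightarrow> x \<in> \<Phi> \<Longrightarrow> sref \<alpha> i x \<in> \<Phi>"
  unfolding sref_def using refl_root simple_root by blast

lemma sref_sref [simp]: "i \<in> I \<Longrightarrow> sref \<alpha> i (sref \<alpha> i x) = x"
  unfolding sref_def using refl_refl simple_root_nonzero by blast

lemma sref_comp_sref: "i \<in> I \<Longrightarrow> sref \<alpha> i \<circ> sref \<alpha> i = id"
  by (simp add: fun_eq_iff)

lemma sref_simple: "i \<in> I \<Longrightarrow> sref \<alpha> i (\<alpha> i) = - \<alpha> i"
  unfolding sref_def using refl_self simple_root_nonzero by blast

lemma bij_sref: "i \<in> I \<Longrightarrow> bij (sref \<alpha> i)"
  using o_bij[OF sref_comp_sref sref_comp_sref] .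

lemma inv_sref: "i \<in> I \<Longrightarrow> inv (sref \<alpha> i) = sref \<alpha> i"
  using inv_unique_comp[OF sref_comp_sref sref_comp_sref] .

lemma linear_weyl: "f \<in> W \<Longrightarrow> linear f"
proof (induction rule: weyl_induct)
  case (sref i f)
  show ?case unfolding sref_def by (rule linear_compose[OF sref(3) linear_refl])
qed (rule linear_id)

lemma weyl_inner: "f \<in> W \<Longrightarrow> f x \<bullet> f y = x \<bullet> y"
  by (induction rule: weyl_induct) (auto simp: sref_def refl_inner_refl simple_root_nonzero)

lemma weyl_root: "f \<in> W \<Longrightarrow> x \<in> \<Phi> \<Longrightarrow> f x \<in> \<Phi>"
  by (induction rule: weyl_induct) (auto simp: sref_root)

lemma weyl_neg: "f \<in> W \<Longrightarrow> f (- x) = - f x"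
  using linear_weyl linear_neg by blast

lemma weyl_comp_refl: "f \<in> W \<Longrightarrow> f \<circ> refl a = refl (f a) \<circ> f"
  using orthogonal_map_comp_refl linear_weyl weyl_inner by blast

lemma bij_weyl: "f \<in> W \<Longrightarrow> bij f"
proof (induction rule: weyl_induct)
  case (sref i f)
  show ?case by (rule bij_comp[OF sref(3) bij_sref[OF sref(1)]])
qed (rule bij_id)

lemma inv_word_eval: "ws \<in> lists I \<Longrightarrow> inv (word_eval \<alpha> ws) = word_eval \<alpha> (rev ws)"
proof (induction ws)
  case (Cons i ws)
  then have i: "i \<in> I" and ws: "ws \<in> lists I" by auto
  have "inv (sref \<alpha> i \<circ> word_eval \<alpha> ws) = inv (word_eval \<alpha> ws) \<circ> sref \<alpha> i"
    using o_inv_distrib[OF bij_sref[OF i] bij_weyl[OF word_eval_in_weyl[OF ws]]] inv_sref[OF i]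
    by simp
  then show ?case
    using Cons.IH[OF ws] by (simp only: word_eval_Cons rev.simps word_eval_append word_eval_Nil comp_id)
qed simp

lemma inv_weyl: "f \<in> weyl \<alpha> S \<Longrightarrow> S \<subseteq> I \<Longrightarrow> inv f \<in> weyl \<alpha> S"
proof -
  assume "f \<in> weyl \<alpha> S" and "S \<subseteq> I"
  then obtain ws where ws: "ws \<in> lists S" "ws \<in> lists I" "f = word_eval \<alpha> ws"
    unfolding weyl_def by blast
  then have "inv f = word_eval \<alpha> (rev ws)" using inv_word_eval by blast
  moreover have "rev ws \<in> lists S" using ws(1) by (simp add: in_lists_conv_set)
  ultimately show ?thesis using word_eval_in_weyl by metis
qed

lemma len_inv_le: "f \<in> W \<Longrightarrow> len \<alpha> I (inv f) \<le> len \<alpha> I f"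
proof -
  assume "f \<in> W"
  then obtain ws where ws: "ws \<in> lists I" "length ws = len \<alpha> I f" "word_eval \<alpha> ws = f"
    by (rule obtain_reduced_word)
  then have "inv f = word_eval \<alpha> (rev ws)" using inv_word_eval by blast
  moreover have "rev ws \<in> lists I" using ws(1) by (simp add: in_lists_conv_set)
  ultimately show ?thesis using len_le_length[of "rev ws" I \<alpha>] ws(2) by simp
qed

lemma len_inv: "f \<in> W \<Longrightarrow> len \<alpha> I (inv f) = len \<alpha> I f"
proof -
  assume f: "f \<in> W"
  have "len \<alpha> I (inv (inv f)) \<le> len \<alpha> I (inv f)"
    using len_inv_le inv_weyl[OF f order_refl] by blast
  moreover have "inv (inv f) = f" using inv_inv_eq[OF bij_weyl[OF f]] .
  ultimately show ?thesis using len_inv_le[OF f] by simp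
qed

lemma len_le_word_comp:
  assumes "ws \<in> lists I" and "x \<in> W"
  shows "len \<alpha> I x \<le> length ws + len \<alpha> I (word_eval \<alpha> ws \<circ> x)"
proof -
  let ?y = "word_eval \<alpha> ws"
  have y: "?y \<in> W" using word_eval_in_weyl[OF assms(1)] .
  have "x = inv ?y \<circ> (?y \<circ> x)"
    using inv_f_f[OF bij_is_inj[OF bij_weyl[OF y]]] by (simp add: fun_eq_iff)
  then have "len \<alpha> I x \<le> len \<alpha> I (inv ?y) + len \<alpha> I (?y \<circ> x)"
    using len_comp_le[OF inv_weyl[OF y order_refl] weyl_comp[OF y assms(2)]] by simp
  also have "len \<alpha> I (inv ?y) \<le> length ws"
    using len_inv[OF y] len_le_length[OF assms(1)] by simp
  finally show ?thesis by (simp add: comp_def)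
qed

lemma deletion:
  assumes "ws \<in> lists I" and "k \<in> I" and "positive (- word_eval \<alpha> ws (\<alpha> k))"
  shows "\<exists>ws'. set ws' \<subseteq> set ws \<and> length ws' < length ws
    \<and> word_eval \<alpha> ws' = word_eval \<alpha> ws \<circ> sref \<alpha> k"
  using assms(1,3)
proof (induction ws)
  case Nil
  then show ?case
    using root_not_positive_neg[OF simple_root nonneg_comb_base[OF finite_I]] assms(2) by auto
next
  case (Cons i ws)
  let ?y = "word_eval \<alpha> ws"
  from Cons have i: "i \<in> I" and ws: "ws \<in> lists I"
    and neg: "positive (- sref \<alpha> i (?y (\<alpha> k)))" by auto
  have y: "?y \<in> W" using word_eval_in_weyl[OF ws] .
  have y_root: "?y (\<alpha> k) \<in> \<Phi>" using weyl_root[OF y simple_root[OF assms(2)]] .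
  show ?case
  proof (cases "positive (- ?y (\<alpha> k))")
    case True
    then obtain ws' where "set ws' \<subseteq> set ws" "length ws' < length ws"
      "word_eval \<alpha> ws' = ?y \<circ> sref \<alpha> k"
      using Cons.IH ws by blast
    then show ?thesis by (intro exI[of _ "i # ws'"]) (auto simp: o_assoc)
  next
    case False
    then have "positive (?y (\<alpha> k))" using root_positive_or_negative y_root by blast
    moreover have "\<not> positive (sref \<alpha> i (?y (\<alpha> k)))"
      using neg root_not_positive_neg sref_root[OF i y_root] by auto
    ultimately have "?y (\<alpha> k) = \<alpha> i" using sref_positive[OF i y_root] by blast
    then have "?y \<circ> sref \<alpha> k = sref \<alpha> i \<circ> ?y"
      using weyl_comp_refl[OF y] by (simp add: sref_def)
    then have "?y = word_eval \<alpha> (i # ws) \<circ> sref \<alpha> k"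
      using i by (simp add: fun_eq_iff)
    then show ?thesis by (metis set_subset_Cons length_Cons lessI)
  qed
qed

lemma len_comp_sref_less:
  assumes "f \<in> W" and "k \<in> I" and "positive (- f (\<alpha> k))"
  shows "len \<alpha> I (f \<circ> sref \<alpha> k) < len \<alpha> I f"
proof -
  obtain ws where ws: "ws \<in> lists I" "length ws = len \<alpha> I f" "word_eval \<alpha> ws = f"
    using obtain_reduced_word[OF assms(1)] .
  then obtain ws' where ws': "set ws' \<subseteq> set ws" "length ws' < length ws"
    "word_eval \<alpha> ws' = f \<circ> sref \<alpha> k"
    using deletion assms(2,3) by blast
  then have "ws' \<in> lists I" using ws(1) by auto
  then show ?thesis using len_le_length[of ws' I \<alpha>] ws ws' by fastforce
qed

lemma len_comp_sref_less_iff: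
  assumes "f \<in> W" and "k \<in> I"
  shows "len \<alpha> I (f \<circ> sref \<alpha> k) < len \<alpha> I f \<longleftrightarrow> positive (- f (\<alpha> k))"
proof
  assume less: "len \<alpha> I (f \<circ> sref \<alpha> k) < len \<alpha> I f"
  show "positive (- f (\<alpha> k))"
  proof (rule ccontr)
    assume "\<not> positive (- f (\<alpha> k))"
    then have "positive (f (\<alpha> k))"
      using root_positive_or_negative weyl_root[OF assms(1) simple_root[OF assms(2)]] by blast
    then have "positive (- (f \<circ> sref \<alpha> k) (\<alpha> k))"
      by (simp add: sref_simple assms weyl_neg)
    then have "len \<alpha> I (f \<circ> sref \<alpha> k \<circ> sref \<alpha> k) < len \<alpha> I (f \<circ> sref \<alpha> k)"
      using len_comp_sref_less weyl_comp[OF assms(1) sref_in_weyl[OF assms(2)]] assms(2) by blast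
    moreover have "f \<circ> sref \<alpha> k \<circ> sref \<alpha> k = f" using assms(2) by (simp add: fun_eq_iff)
    ultimately show False using less by simp
  qed
qed (rule len_comp_sref_less[OF assms])

lemma len_sref_comp_less_iff:
  assumes "x \<in> W" and "i \<in> I"
  shows "len \<alpha> I (sref \<alpha> i \<circ> x) < len \<alpha> I x \<longleftrightarrow> positive (- inv x (\<alpha> i))"
proof -
  have "inv (sref \<alpha> i \<circ> x) = inv x \<circ> sref \<alpha> i"
    using o_inv_distrib[OF bij_sref bij_weyl] inv_sref assms by simp
  then have "len \<alpha> I (sref \<alpha> i \<circ> x) = len \<alpha> I (inv x \<circ> sref \<alpha> i)"
    using len_inv weyl_comp[OF sref_in_weyl assms(1)] assms(2) by metis
  then show ?thesis
    using len_comp_sref_less_iff[OF inv_weyl[OF assms(1)] assms(2)] len_inv[OF assms(1)] by simp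
qed

lemma sref_comp_bruhat_step:
  assumes "x \<in> W" and "i \<in> I" and "len \<alpha> I (sref \<alpha> i \<circ> x) < len \<alpha> I x"
  shows "(sref \<alpha> i \<circ> x, x) \<in> bruhat_step \<alpha> I"
proof -
  obtain ws where ws: "ws \<in> lists I" "word_eval \<alpha> ws = x"
    using assms(1) unfolding weyl_def by blast
  then have inv_x: "inv x = word_eval \<alpha> (rev ws)" using inv_word_eval by blast
  let ?t = "inv x \<circ> sref \<alpha> i \<circ> x"
  have "?t \<in> reflections \<alpha> I"
    unfolding reflections_def inv_x using ws assms(2)
    by (intro CollectI exI[of _ "rev ws"] exI[of _ i]) (simp add: in_lists_conv_set)
  moreover have "(sref \<alpha> i \<circ> x) \<circ> ?t = x"
    using bij_is_surj[OF bij_weyl[OF assms(1)]] assms(2) by (simp add: fun_eq_iff surj_f_inv_f)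
  ultimately show ?thesis
    using bruhat_stepI[OF weyl_comp[OF sref_in_weyl assms(1)]] assms by metis
qed

lemma reduced_word_snoc_negative:
  assumes "S \<subseteq> I" and "ws @ [j] \<in> lists S"
    and "length (ws @ [j]) = len \<alpha> S (word_eval \<alpha> (ws @ [j]))"
  shows "positive (- word_eval \<alpha> (ws @ [j]) (\<alpha> j))"
proof -
  let ?y = "word_eval \<alpha> ws"
  have j: "j \<in> I" and ws: "ws \<in> lists I" using assms(1,2) by auto
  have "positive (?y (\<alpha> j))"
  proof (rule ccontr)
    assume "\<not> positive (?y (\<alpha> j))"
    then have "positive (- ?y (\<alpha> j))"
      using root_positive_or_negative weyl_root[OF word_eval_in_weyl[OF ws] simple_root[OF j]] by blast
    then obtain ws' where ws': "set ws' \<subseteq> set ws" "length ws' < length ws"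
      "word_eval \<alpha> ws' = word_eval \<alpha> (ws @ [j])"
      using deletion[OF ws j] by (auto simp: word_eval_append)
    then have "len \<alpha> S (word_eval \<alpha> (ws @ [j])) \<le> length ws'"
      using len_le_length[of ws' S \<alpha>] assms(2) by fastforce
    then show False using ws'(2) assms(3) by simp
  qed
  then show ?thesis
    using weyl_neg[OF word_eval_in_weyl[OF ws]] by (simp add: word_eval_append sref_simple j)
qed

end

locale parabolic = simple_roots +
  fixes J
  assumes J_subset: "J \<subseteq> I"
begin

abbreviation WJ where "WJ \<equiv> weyl \<alpha> J"

definition J_positive :: "('a \<Rightarrow> 'a) \<Rightarrow> bool" where
  "J_positive a \<longleftrightarrow> (\<forall>j\<in>J. positive (a (\<alpha> j)))"

lemma finite_J: "finite J"
  using finite_subset[OF J_subset finite_I] .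

lemma weyl_J_subset: "f \<in> WJ \<Longrightarrow> f \<in> W"
  using weyl_mono[OF J_subset] by blast

lemma weyl_J_span:
  assumes "f \<in> WJ" and "x \<in> span (\<alpha> ` J)"
  shows "f x \<in> span (\<alpha> ` J)"
  using assms(1)
proof (induction rule: weyl_induct)
  case id
  then show ?case using assms(2) by simp
next
  case (sref j f)
  have "\<alpha> j \<in> span (\<alpha> ` J)" using sref(1) by (intro span_base) simp
  then show ?case using sref(3) unfolding sref_def refl_def by (simp add: span_diff span_scale)
qed

lemma nonneg_comb_J_if_span:
  assumes "positive x" and "x \<in> span (\<alpha> ` J)"
  shows "nonneg_comb \<alpha> J x"
proof -
  obtain c where c: "\<forall>i\<in>I. 0 \<le> c i" "x = (\<Sum>i\<in>I. c i *\<^sub>R \<alpha> i)"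
    using assms(1) unfolding nonneg_comb_def by blast
  obtain u where u: "x = (\<Sum>v\<in>\<alpha> ` J. u v *\<^sub>R v)"
    using assms(2) span_finite[of "\<alpha> ` J"] finite_J by auto
  have "inj_on \<alpha> I" using simple_system by (simp add: simple_system_def)
  then have inj: "inj_on \<alpha> J" using J_subset by (rule inj_on_subset)
  define e where "e k = (if k \<in> J then u (\<alpha> k) else 0)" for k
  have "x = (\<Sum>j\<in>J. u (\<alpha> j) *\<^sub>R \<alpha> j)"
    using u sum.reindex[OF inj, of "\<lambda>v. u v *\<^sub>R v"] by simp
  also have "\<dots> = (\<Sum>j\<in>J. e j *\<^sub>R \<alpha> j)" by (rule sum.cong) (auto simp: e_def)
  also have "\<dots> = (\<Sum>j\<in>I. e j *\<^sub>R \<alpha> j)"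
    by (rule sum.mono_neutral_left[OF finite_I J_subset]) (auto simp: e_def)
  finally have "\<forall>k\<in>I. c k = e k" using c(2) simple_coeff_unique by metis
  then have "\<forall>k\<in>I - J. c k = 0" by (auto simp: e_def)
  then have "x = (\<Sum>j\<in>J. c j *\<^sub>R \<alpha> j)"
    unfolding c(2) by (intro sum.mono_neutral_right[OF finite_I J_subset]) auto
  then show ?thesis unfolding nonneg_comb_def using c(1) J_subset by blast
qed

lemma J_positive_nonneg_comb:
  assumes "a \<in> W" and "J_positive a" and "nonneg_comb \<alpha> J x"
  shows "positive (a x)"
proof -
  obtain c where c: "\<forall>j\<in>J. 0 \<le> c j" "x = (\<Sum>j\<in>J. c j *\<^sub>R \<alpha> j)"
    using assms(3) unfolding nonneg_comb_def by blast
  then have "a x = (\<Sum>j\<in>J. c j *\<^sub>R a (\<alpha> j))"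
    using linear_weyl[OF assms(1)] by (simp add: linear_sum linear_scale)
  also have "positive \<dots>"
    by (rule nonneg_comb_sum[OF finite_J]) (use c(1) assms(2) in \<open>simp add: J_positive_def\<close>)
  finally show ?thesis .
qed

lemma weyl_J_positive_outside_span:
  assumes "f \<in> WJ" and "\<beta> \<in> \<Phi>" and "positive \<beta>" and "\<beta> \<notin> span (\<alpha> ` J)"
  shows "positive (f \<beta>)"
proof -
  have "positive (f \<beta>) \<and> f \<beta> \<notin> span (\<alpha> ` J)"
    using assms(1)
  proof (induction rule: weyl_induct)
    case id
    then show ?case using assms(3,4) by simp
  next
    case (sref j f)
    have j: "j \<in> I" using sref(1) J_subset by blast
    have root: "f \<beta> \<in> \<Phi>" using weyl_root[OF weyl_J_subset[OF sref(2)] assms(2)] .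
    have "\<alpha> j \<in> span (\<alpha> ` J)" using sref(1) by (intro span_base) simp
    then have "f \<beta> \<noteq> \<alpha> j" using sref(3) by auto
    then have "positive (sref \<alpha> j (f \<beta>))" using sref_positive[OF j root] sref(3) by blast
    moreover have "sref \<alpha> j (f \<beta>) \<notin> span (\<alpha> ` J)"
    proof
      assume "sref \<alpha> j (f \<beta>) \<in> span (\<alpha> ` J)"
      then have "sref \<alpha> j (sref \<alpha> j (f \<beta>)) \<in> span (\<alpha> ` J)"
        using weyl_J_span[OF sref_in_weyl[OF sref(1)]] by blast
      then show False using sref(3) j by simp
    qed
    ultimately show ?case by simp
  qed
  then show ?thesis ..
qed

lemma min_reps_J_positive:
  assumes "w \<in> min_reps \<alpha> I J"
  shows "J_positive w"
  unfolding J_positive_def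
proof
  fix j assume "j \<in> J"
  then have j: "j \<in> I" using J_subset by blast
  have w: "w \<in> W" and "len \<alpha> I w \<le> len \<alpha> I (w \<circ> sref \<alpha> j)"
    using assms sref_in_weyl[OF \<open>j \<in> J\<close>] unfolding min_reps_def by auto
  then have "\<not> positive (- w (\<alpha> j))" using len_comp_sref_less_iff[OF w j] by simp
  then show "positive (w (\<alpha> j))"
    using root_positive_or_negative weyl_root[OF w simple_root[OF j]] by blast
qed

lemma J_positive_comp_weyl_J_eq_id:
  assumes "a \<in> W" and "c \<in> WJ" and "J_positive a" and "J_positive (a \<circ> c)"
  shows "c = id"
proof (rule ccontr)
  assume "c \<noteq> id"
  obtain ws where ws: "ws \<in> lists J" "length ws = len \<alpha> J c" "word_eval \<alpha> ws = c"
    using obtain_reduced_word[OF assms(2)] .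
  then obtain vs j where vs: "ws = vs @ [j]"
    using \<open>c \<noteq> id\<close> by (cases ws rule: rev_exhaust) auto
  then have j: "j \<in> J" using ws(1) by simp
  have neg: "positive (- c (\<alpha> j))"
    using reduced_word_snoc_negative[OF J_subset, of vs j] ws unfolding vs by metis
  have "- c (\<alpha> j) \<in> span (\<alpha> ` J)"
    using weyl_J_span[OF assms(2) span_base] span_neg j by blast
  then have "positive (a (- c (\<alpha> j)))"
    using J_positive_nonneg_comb[OF assms(1,3) nonneg_comb_J_if_span[OF neg]] by blast
  moreover have "positive (a (c (\<alpha> j)))" using assms(4) j unfolding J_positive_def by simp
  moreover have "a (c (\<alpha> j)) \<in> \<Phi>"
    using weyl_root[OF assms(1) weyl_root[OF weyl_J_subset[OF assms(2)]]] simple_root j J_subset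
    by blast
  ultimately show False using root_not_positive_neg weyl_neg[OF assms(1)] by metis
qed

lemma J_positive_coset_rep_unique:
  assumes "a \<in> W" and "J_positive a" and "b \<in> WJ"
    and "a' \<in> W" and "J_positive a'" and "b' \<in> WJ" and "a \<circ> b = a' \<circ> b'"
  shows "a' = a"
proof -
  have "a' = a' \<circ> b' \<circ> inv b'"
    using surj_f_inv_f[OF bij_is_surj[OF bij_weyl[OF weyl_J_subset[OF assms(6)]]]]
    by (simp add: fun_eq_iff)
  also have "\<dots> = a \<circ> (b \<circ> inv b')" using assms(7) by (simp add: o_assoc)
  finally have a': "a' = a \<circ> (b \<circ> inv b')" .
  have "b \<circ> inv b' \<in> WJ" using weyl_comp[OF assms(3) inv_weyl[OF assms(6) J_subset]] .
  then have "b \<circ> inv b' = id"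
    using J_positive_comp_weyl_J_eq_id[OF assms(1) _ assms(2)] assms(5) a' by metis
  then show ?thesis using a' by simp
qed

lemma J_positive_sref_comp:
  assumes "i \<in> I" and "a \<in> W" and "J_positive a" and "positive (- inv a (\<alpha> i))"
  shows "J_positive (sref \<alpha> i \<circ> a)"
  unfolding J_positive_def
proof
  fix j assume "j \<in> J"
  then have j: "j \<in> I" using J_subset by blast
  have root: "a (\<alpha> j) \<in> \<Phi>" using weyl_root[OF assms(2) simple_root[OF j]] .
  have "a (\<alpha> j) \<noteq> \<alpha> i"
  proof
    assume "a (\<alpha> j) = \<alpha> i"
    then have "inv a (\<alpha> i) = \<alpha> j"
      using inv_f_f[OF bij_is_inj[OF bij_weyl[OF assms(2)]]] by metis
    then show False
      using assms(4) root_not_positive_neg[OF simple_root[OF j] nonneg_comb_base[OF finite_I j]]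
      by simp
  qed
  then show "positive ((sref \<alpha> i \<circ> a) (\<alpha> j))"
    using sref_positive[OF assms(1) root] assms(3) \<open>j \<in> J\<close> unfolding J_positive_def by simp
qed

text \<open>If \<open>s\<^sub>i\<close> shortens \<open>a b\<close> but not \<open>a\<close>, then \<open>a\<^sup>-\<^sup>1 \<alpha>\<^sub>i\<close> is a positive root made negative
  by \<open>b\<^sup>-\<^sup>1 \<in> W\<^sub>J\<close>, so it lies in the span of the \<open>\<alpha>\<^sub>j\<close>, \<open>j \<in> J\<close>; applying \<open>a\<close> writes \<open>\<alpha>\<^sub>i\<close> as a
  nonnegative combination of the positive roots \<open>a \<alpha>\<^sub>j\<close>.\<close>

lemma J_positive_maps_simple_root:
  assumes "i \<in> I" and "a \<in> W" and "J_positive a" and "b \<in> WJ"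
    and "positive (inv a (\<alpha> i))" and "positive (- inv (a \<circ> b) (\<alpha> i))"
  shows "\<exists>j\<in>J. a (\<alpha> j) = \<alpha> i"
proof -
  let ?\<gamma> = "inv a (\<alpha> i)"
  have \<gamma>: "?\<gamma> \<in> \<Phi>" using weyl_root[OF inv_weyl[OF assms(2) order_refl] simple_root[OF assms(1)]] .
  have b: "b \<in> W" using weyl_J_subset[OF assms(4)] .
  have "inv (a \<circ> b) = inv b \<circ> inv a" using o_inv_distrib[OF bij_weyl[OF assms(2)] bij_weyl[OF b]] .
  then have neg: "positive (- inv b ?\<gamma>)" using assms(6) by simp
  have "?\<gamma> \<in> span (\<alpha> ` J)"
  proof (rule ccontr)
    assume "?\<gamma> \<notin> span (\<alpha> ` J)"
    then have "positive (inv b ?\<gamma>)"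
      using weyl_J_positive_outside_span[OF inv_weyl[OF assms(4) J_subset] \<gamma> assms(5)] by blast
    then show False
      using neg root_not_positive_neg weyl_root[OF inv_weyl[OF b order_refl] \<gamma>] by blast
  qed
  then obtain c where c: "\<forall>j\<in>J. 0 \<le> c j" "?\<gamma> = (\<Sum>j\<in>J. c j *\<^sub>R \<alpha> j)"
    using nonneg_comb_J_if_span[OF assms(5)] unfolding nonneg_comb_def by blast
  have "\<alpha> i = a ?\<gamma>" using surj_f_inv_f[OF bij_is_surj[OF bij_weyl[OF assms(2)]]] by simp
  also have "\<dots> = (\<Sum>j\<in>J. c j *\<^sub>R a (\<alpha> j))"
    using c(2) linear_weyl[OF assms(2)] by (simp add: linear_sum linear_scale)
  finally have "\<alpha> i = (\<Sum>j\<in>J. c j *\<^sub>R a (\<alpha> j))" .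
  moreover have "0 \<le> c j \<and> a (\<alpha> j) \<in> \<Phi> \<and> positive (a (\<alpha> j))" if "j \<in> J" for j
    using that c(1) assms(3) weyl_root[OF assms(2) simple_root] J_subset
    unfolding J_positive_def by blast
  ultimately show ?thesis by (rule simple_root_indecomposable[OF finite_J assms(1)])
qed

lemma left_descent_step:
  assumes i: "i \<in> I" and a: "a \<in> W" "J_positive a" and b: "b \<in> WJ"
    and descent: "len \<alpha> I (sref \<alpha> i \<circ> (a \<circ> b)) < len \<alpha> I (a \<circ> b)"
  shows "\<exists>a' b'. a' \<in> W \<and> J_positive a' \<and> b' \<in> WJ \<and> sref \<alpha> i \<circ> (a \<circ> b) = a' \<circ> b'
    \<and> (len \<alpha> I a' < len \<alpha> I a \<and> (a', a) \<in> bruhat_step \<alpha> I \<or> a' = a \<and> (\<exists>j\<in>J. a (\<alpha> j) = \<alpha> i))"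
proof (cases "positive (inv a (\<alpha> i))")
  case True
  have "positive (- inv (a \<circ> b) (\<alpha> i))"
    using descent len_sref_comp_less_iff[OF weyl_comp[OF a(1) weyl_J_subset[OF b]] i] by simp
  then obtain j where j: "j \<in> J" "a (\<alpha> j) = \<alpha> i"
    using J_positive_maps_simple_root[OF i a b True] by blast
  then have "a \<circ> sref \<alpha> j = sref \<alpha> i \<circ> a" using weyl_comp_refl[OF a(1)] by (simp add: sref_def)
  then have "sref \<alpha> i \<circ> (a \<circ> b) = a \<circ> (sref \<alpha> j \<circ> b)" by (metis o_assoc)
  moreover have "sref \<alpha> j \<circ> b \<in> WJ" using weyl_comp[OF sref_in_weyl[OF j(1)] b] .
  ultimately show ?thesis using a j by blast
next
  case False
  then have neg: "positive (- inv a (\<alpha> i))"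
    using root_positive_or_negative weyl_root[OF inv_weyl[OF a(1) order_refl] simple_root[OF i]]
    by blast
  then have less: "len \<alpha> I (sref \<alpha> i \<circ> a) < len \<alpha> I a"
    using len_sref_comp_less_iff[OF a(1) i] by simp
  have "sref \<alpha> i \<circ> (a \<circ> b) = (sref \<alpha> i \<circ> a) \<circ> b" by (rule o_assoc)
  then show ?thesis
    using weyl_comp[OF sref_in_weyl[OF i] a(1)] J_positive_sref_comp[OF i a neg] b less
      sref_comp_bruhat_step[OF a(1) i less]
    by blast
qed

lemma descent_chain:
  assumes "ws \<in> lists I" and "a \<in> W" and "J_positive a" and "b \<in> WJ"
    and "len \<alpha> I (word_eval \<alpha> ws \<circ> (a \<circ> b)) + length ws = len \<alpha> I (a \<circ> b)"
  shows "\<exists>a' b'. a' \<in> W \<and> J_positive a' \<and> b' \<in> WJ \<and> word_eval \<alpha> ws \<circ> (a \<circ> b) = a' \<circ> b'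
    \<and> (a', a) \<in> (bruhat_step \<alpha> I)\<^sup>*
    \<and> (len \<alpha> I a' < len \<alpha> I a \<or> a' = a \<and> (\<forall>i\<in>set ws. \<exists>j\<in>J. a (\<alpha> j) = \<alpha> i))"
  using assms(1,5)
proof (induction ws)
  case Nil
  then show ?case using assms(2-4) by auto
next
  case (Cons i ws)
  let ?z = "word_eval \<alpha> ws \<circ> (a \<circ> b)"
  from Cons have i: "i \<in> I" and ws: "ws \<in> lists I" by auto
  have ab: "a \<circ> b \<in> W" using weyl_comp[OF assms(2) weyl_J_subset[OF assms(4)]] .
  have z: "?z \<in> W" using weyl_comp[OF word_eval_in_weyl[OF ws] ab] .
  have eq: "word_eval \<alpha> (i # ws) \<circ> (a \<circ> b) = sref \<alpha> i \<circ> ?z" by (simp add: o_assoc)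
  have "len \<alpha> I (sref \<alpha> i \<circ> ?z) + Suc (length ws) = len \<alpha> I (a \<circ> b)"
    using Cons.prems[unfolded eq] by (simp only: length_Cons)
  moreover have "len \<alpha> I ?z \<le> 1 + len \<alpha> I (sref \<alpha> i \<circ> ?z)"
    using len_le_word_comp[of "[i]" ?z] i z by simp
  moreover have "len \<alpha> I (a \<circ> b) \<le> length ws + len \<alpha> I ?z" using len_le_word_comp[OF ws ab] .
  ultimately have len_z: "len \<alpha> I ?z + length ws = len \<alpha> I (a \<circ> b)"
    and descent: "len \<alpha> I (sref \<alpha> i \<circ> ?z) < len \<alpha> I ?z"
    by linarith+
  obtain a1 b1 where IH: "a1 \<in> W" "J_positive a1" "b1 \<in> WJ" "?z = a1 \<circ> b1"
    "(a1, a) \<in> (bruhat_step \<alpha> I)\<^sup>*"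
    "len \<alpha> I a1 < len \<alpha> I a \<or> a1 = a \<and> (\<forall>k\<in>set ws. \<exists>j\<in>J. a (\<alpha> j) = \<alpha> k)"
    using Cons.IH[OF len_z] by blast
  obtain a' b' where step: "a' \<in> W" "J_positive a'" "b' \<in> WJ" "sref \<alpha> i \<circ> (a1 \<circ> b1) = a' \<circ> b'"
    "len \<alpha> I a' < len \<alpha> I a1 \<and> (a', a1) \<in> bruhat_step \<alpha> I \<or> a' = a1 \<and> (\<exists>j\<in>J. a1 (\<alpha> j) = \<alpha> i)"
    using left_descent_step[OF i IH(1-3)] descent IH(4) by auto
  have "(a', a) \<in> (bruhat_step \<alpha> I)\<^sup>*"
    using step(5) IH(5) by (auto intro: converse_rtrancl_into_rtrancl)
  moreover have "len \<alpha> I a' < len \<alpha> I a \<or> a' = a \<and> (\<forall>k\<in>set (i # ws). \<exists>j\<in>J. a (\<alpha> j) = \<alpha> k)"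
    using step(5) IH(6) by auto
  moreover have "word_eval \<alpha> (i # ws) \<circ> (a \<circ> b) = a' \<circ> b'" using eq IH(4) step(4) by simp
  ultimately show ?case using step(1-3) by blast
qed

lemma reduced_word_coset_descent:
  assumes "ws \<in> lists I" and w: "w \<in> W" "J_positive w" and v: "v \<in> WJ"
    and w': "w' \<in> W" "J_positive w'" and v': "v' \<in> WJ"
    and eq: "word_eval \<alpha> ws \<circ> (w \<circ> v) = w' \<circ> v'"
    and len: "len \<alpha> I (w' \<circ> v') + length ws = len \<alpha> I (w \<circ> v)"
  shows "(w', w) \<in> (bruhat_step \<alpha> I)\<^sup>* \<and> (w' = w \<longrightarrow> (\<forall>i\<in>set ws. \<exists>j\<in>J. w (\<alpha> j) = \<alpha> i))"
proof -
  obtain a b where ab: "a \<in> W" "J_positive a" "b \<in> WJ" "w' \<circ> v' = a \<circ> b"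
    "(a, w) \<in> (bruhat_step \<alpha> I)\<^sup>*"
    "len \<alpha> I a < len \<alpha> I w \<or> a = w \<and> (\<forall>i\<in>set ws. \<exists>j\<in>J. w (\<alpha> j) = \<alpha> i)"
    using descent_chain[OF assms(1) w v] eq len by auto
  have "a = w'" using J_positive_coset_rep_unique[OF w' v' ab(1-3,4)] .
  then show ?thesis using ab(5,6) by auto
qed

end

theorem lemma5p8:
  fixes \<Phi> :: "'a::euclidean_space set" and I J :: "'i set" and \<alpha> :: "'i \<Rightarrow> 'a"
    and u w v w' v' :: "'a \<Rightarrow> 'a"
  assumes "root_system \<Phi>" and "simple_system \<Phi> I \<alpha>"
    and "J \<subseteq> I"
    and "u \<in> weyl \<alpha> I" and "w \<in> min_reps \<alpha> I J" and "v \<in> weyl \<alpha> J"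
    and "w' \<in> min_reps \<alpha> I J" and "v' \<in> weyl \<alpha> J"
    and "u \<circ> w \<circ> v = w' \<circ> v'"
    and "int (len \<alpha> I (u \<circ> w \<circ> v)) = int (len \<alpha> I (w \<circ> v)) - int (len \<alpha> I u)"
  shows "bruhat_le \<alpha> I w' w
    \<and> (w' = w \<longrightarrow> (\<lambda>i. inv w (\<alpha> i)) ` supp \<alpha> I u \<subseteq> \<alpha> ` J)"
proof -
  interpret parabolic \<Phi> I \<alpha> J using assms(1-3) by unfold_locales
  have w: "w \<in> W" "J_positive w" and w': "w' \<in> W" "J_positive w'"
    using assms(5,7) min_reps_J_positive unfolding min_reps_def by auto
  have descent: "(w', w) \<in> (bruhat_step \<alpha> I)\<^sup>* \<and> (w' = w \<longrightarrow> (\<forall>i\<in>set ws. \<exists>j\<in>J. w (\<alpha> j) = \<alpha> i))"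
    if "ws \<in> lists I" "length ws = len \<alpha> I u" "word_eval \<alpha> ws = u" for ws
    using reduced_word_coset_descent[OF that(1) w assms(6) w' assms(8)] that(2,3) assms(9,10)
    by (simp add: o_assoc)
  obtain ws where "ws \<in> lists I" "length ws = len \<alpha> I u" "word_eval \<alpha> ws = u"
    using obtain_reduced_word[OF assms(4)] .
  then have "bruhat_le \<alpha> I w' w" using descent w(1) w'(1) by (simp add: bruhat_le_iff)
  moreover have "inv w (\<alpha> i) \<in> \<alpha> ` J" if eq: "w' = w" and i: "i \<in> supp \<alpha> I u" for i
  proof -
    obtain vs where "vs \<in> lists I" "word_eval \<alpha> vs = u" "length vs = len \<alpha> I u" "i \<in> set vs"
      using i unfolding supp_def by blast
    then obtain j where "j \<in> J" "w (\<alpha> j) = \<alpha> i" using descent eq by blast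
    then show ?thesis using inv_f_f[OF bij_is_inj[OF bij_weyl[OF w(1)]], of "\<alpha> j"] by auto
  qed
  ultimately show ?thesis by blast
qed

end
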